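(* Let $p\ge 2$, let $\alpha_1,\dots,\alpha_p,c$ be real numbers, and let $B$ be the $p\times p$ symmetric matrix with diagonal entries $\alpha_1,\dots,\alpha_p$ and all off-diagonal entries equal to $c$. For $k=1,\dots,p$ let $d_k(c)$ denote the $k$-th leading principal minor of $B$ (determinant of the upper-left $k\times k$ submatrix). Then $d_k$ is a polynomial in $c$ of degree $k$ given by $$d_k(c)=\prod_{m=1}^k(\alpha_m-c)+c\sum_{m=1}^k\ \prod_{\substack{1\le \ell\le k\\ \ell\ne m}}(\alpha_\ell-c).$$ Assume furthermore that $0<\alpha_1\le\alpha_2\le\dots\le\alpha_p<1$. Then for each $k\in\{2,\dots,p\}$ all roots of $d_k$ are real; denoting them $r_{k,1}\le r_{k,2}\le\dots\le r_{k,k}$ (with multiplicity), they interlace with the $\alpha$'s: $$r_{k,1}<0<\alpha_1\le r_{k,2}\le\alpha_2\le\dots\le r_{k,k}\le\alpha_k<1,$$ and moreover $$-\sqrt{\alpha_1\alpha_2}=r_{2,1}\le r_{3,1}\le\dots\le r_{k,1}<0<r_{k,2}\le\dots\le r_{3,2}\le r_{2,2}=\sqrt{\alpha_1\alpha_2}.$$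
   Context: Since reordering the $\alpha$'s (with the corresponding simultaneous permutation of rows and columns) does not change $\det B=d_p(c)$, the roots $r_{p,1}$, $r_{p,2}$ of $d_p$ are the same for any ordering; the sorted order $\alpha_1\le\dots\le\alpha_p$ is assumed for the statements about the leading minors $d_k$, $k<p$. *)

theory Defs
  imports "Jordan_Normal_Form.Determinant" "HOL-Computational_Algebra.Polynomial"
begin

text \<open>The p x p matrix B with diagonal entries alpha 1, ..., alpha p (1-based indexing of
  alpha) and all off-diagonal entries equal to c.\<close>
definition Bmat :: "nat \<Rightarrow> (nat \<Rightarrow> real) \<Rightarrow> real \<Rightarrow> real mat" where
  "Bmat p alpha c = mat p p (\<lambda>(i, j). if i = j then alpha (i + 1) else c)"

definition lead_sub :: "nat \<Rightarrow> real mat \<Rightarrow> real mat" where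
  "lead_sub k A = mat k k (\<lambda>(i, j). A $$ (i, j))"

definition lead_minor :: "nat \<Rightarrow> real mat \<Rightarrow> real" where
  "lead_minor k A = det (lead_sub k A)"

definition dpoly :: "(nat \<Rightarrow> real) \<Rightarrow> nat \<Rightarrow> real poly" where
  "dpoly alpha k =
     (\<Prod>m\<in>{1..k}. [:alpha m, -1:])
     + [:0, 1:] * (\<Sum>m\<in>{1..k}. \<Prod>l\<in>{1..k} - {m}. [:alpha l, -1:])"

end

theory Submission
  imports Defs
begin

text \<open>
  Splitting off the last row of the matrix gives the recursion
  \<open>d (k+1) c = (\<alpha> (k+1) - c) * d k c + c * (\<Prod>l=1..k. \<alpha> l - c)\<close>,
  which identifies the leading minors with the stated polynomials.

  For the roots, consider the weighted polynomial
  \<open>E c = (\<Prod>m\<in>S. a m - c) + c * (\<Sum>m\<in>S. w m * (\<Prod>l\<in>S-{m}. a l - c))\<close>; \<open>d k\<close> is the case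
  \<open>S = {1..k}\<close>, \<open>a = \<alpha>\<close>, \<open>w = 1\<close>. If two indices carry the same value \<open>a\<close>, then \<open>a - c\<close> splits
  off and the two indices merge into one whose weight is the sum. Removing all repetitions of
  the \<open>\<alpha>\<close>'s this way leaves \<open>E\<close> over distinct positive values with positive weights summing
  to \<open>k\<close>. At a value \<open>a m\<close>, \<open>E\<close> equals \<open>a m * w m * (\<Prod>l\<noteq>m. a l - a m)\<close>, whose sign alternates
  along the sorted values; and \<open>E\<close> is positive at \<open>0\<close> but negative near \<open>-\<infinity>\<close> since \<open>k > 1\<close>.
  Hence \<open>E\<close> has a root in each gap between consecutive values and one negative root, which
  are all of its roots, and together with the split-off values they interlace with the \<open>\<alpha>\<close>'s.

  At a root \<open>r\<close> of \<open>d k\<close> the recursion gives \<open>d (k+1) r = r * (\<Prod>l=1..k. \<alpha> l - r)\<close>; comparing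
  this sign with \<open>d (k+1) 0 > 0\<close> at the two roots nearest to \<open>0\<close> shows that they move towards
  \<open>0\<close> as \<open>k\<close> grows.
\<close>

section \<open>Polynomials with prescribed distinct roots\<close>

lemma prod_linear_dvd_of_roots:
  fixes p :: "'a::idom poly"
  assumes "finite Z" "\<forall>z\<in>Z. poly p z = 0"
  shows "(\<Prod>z\<in>Z. [:- z, 1:]) dvd p"
  using assms
proof (induction Z arbitrary: p)
  case (insert x Z)
  obtain q where q: "p = [:- x, 1:] * q"
    using insert.prems poly_eq_0_iff_dvd by (metis dvdE insertI1)
  have "\<forall>z\<in>Z. poly q z = 0"
    using insert.prems insert.hyps by (auto simp: q)
  then have "(\<Prod>z\<in>Z. [:- z, 1:]) dvd q"
    by (rule insert.IH)
  then have "[:- x, 1:] * (\<Prod>z\<in>Z. [:- z, 1:]) dvd p"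
    unfolding q by (rule mult_dvd_mono[OF dvd_refl])
  then show ?case
    using insert.hyps by simp
qed simp

lemma poly_eq_smult_prod_distinct_roots:
  fixes p :: "'a::idom poly"
  assumes "finite Z" "\<forall>z\<in>Z. poly p z = 0" "card Z = degree p"
  shows "p = smult (lead_coeff p) (\<Prod>z\<in>Z. [:- z, 1:])"
proof -
  define P where "P = (\<Prod>z\<in>Z. [:- z, 1::'a:])"
  obtain h where h: "p = P * h"
    using prod_linear_dvd_of_roots[OF assms(1,2)] by (auto simp: P_def)
  have "lead_coeff P = 1"
    by (simp add: P_def lead_coeff_prod)
  moreover have "degree P = card Z"
    by (simp add: P_def degree_prod_eq_sum_degree)
  ultimately have P: "degree P = card Z" "lead_coeff P = 1"
    by simp_all
  show ?thesis
  proof (cases "h = 0")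
    case False
    have "P \<noteq> 0"
      using P by auto
    then have "degree p = degree P + degree h"
      using h False by (simp add: degree_mult_eq)
    then have "degree h = 0"
      using P assms(3) by simp
    then obtain c where "h = [:c:]"
      by (rule degree_eq_zeroE)
    then show ?thesis
      using h P by (simp add: P_def lead_coeff_mult)
  qed (use h in simp)
qed

lemma root_of_smult_prod_linear:
  fixes p :: "'a::idom poly"
  assumes "p = smult a (\<Prod>j\<in>J. [:- r j, 1:])" "a \<noteq> 0" "finite J" "poly p x = 0"
  shows "\<exists>j\<in>J. x = r j"
  using assms by (auto simp: poly_prod prod_zero_iff)

lemma map_poly_of_real_mult:
  "map_poly of_real (p * q)
     = map_poly of_real p * (map_poly of_real q :: 'a::{real_algebra_1,comm_ring_1} poly)"
  by (rule poly_eqI) (simp add: coeff_map_poly coeff_mult of_real_sum)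

lemma map_poly_of_real_smult_prod_linear:
  "map_poly of_real (smult a (\<Prod>j\<in>J. [:- r j, 1:]))
     = smult (of_real a) (\<Prod>j\<in>J. [:- of_real (r j), 1 :: 'a::{real_algebra_1,comm_ring_1}:])"
proof (induction J rule: infinite_finite_induct)
  case (insert j J)
  have "smult a (\<Prod>j\<in>insert j J. [:- r j, 1:]) = [:- r j, 1:] * smult a (\<Prod>j\<in>J. [:- r j, 1:])"
    using insert.hyps by simp
  then show ?case
    using insert by (simp only: map_poly_of_real_mult) (simp add: map_poly_pCons)
qed (simp_all add: map_poly_smult map_poly_pCons)

lemma complex_root_of_smult_prod_linear:
  assumes "p = smult a (\<Prod>j\<in>J. [:- r j, 1:])" "a \<noteq> 0"
    and "poly (map_poly complex_of_real p) z = 0"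
  shows "z \<in> \<real>"
proof -
  have "(\<Prod>j\<in>J. z - of_real (r j)) = 0"
    using assms by (simp add: map_poly_of_real_smult_prod_linear poly_prod)
  then show ?thesis
    by (cases "finite J") (auto simp: prod_zero_iff)
qed

section \<open>Weighted minor polynomials\<close>

definition weighted_dpoly :: "('i \<Rightarrow> real) \<Rightarrow> 'i set \<Rightarrow> ('i \<Rightarrow> real) \<Rightarrow> real poly" where
  "weighted_dpoly a S w =
     (\<Prod>l\<in>S. [:a l, -1:]) + [:0, 1:] * (\<Sum>m\<in>S. smult (w m) (\<Prod>l\<in>S - {m}. [:a l, -1:]))"

lemma poly_weighted_dpoly:
  "poly (weighted_dpoly a S w) c
     = (\<Prod>l\<in>S. a l - c) + c * (\<Sum>m\<in>S. w m * (\<Prod>l\<in>S - {m}. a l - c))"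
  by (simp add: weighted_dpoly_def poly_prod poly_sum)

lemma weighted_dpoly_insert:
  assumes "finite S" "x \<notin> S"
  shows "weighted_dpoly a (insert x S) w
           = [:a x, -1:] * weighted_dpoly a S w + smult (w x) (pCons 0 (\<Prod>l\<in>S. [:a l, -1:]))"
proof -
  have "insert x S - {m} = insert x (S - {m})" if "m \<in> S" for m
    using that assms by auto
  then have "(\<Sum>m\<in>S. smult (w m) (\<Prod>l\<in>insert x S - {m}. [:a l, -1:]))
      = [:a x, -1:] * (\<Sum>m\<in>S. smult (w m) (\<Prod>l\<in>S - {m}. [:a l, -1:]))"
    using assms by (simp add: sum_distrib_left mult.left_commute cong: sum.cong)
  moreover have "insert x S - {x} = S"
    using assms by auto
  ultimately show ?thesis
    using assms by (simp add: weighted_dpoly_def algebra_simps)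
qed

lemma weighted_dpoly_update:
  assumes "finite S" "i \<in> S"
  shows "weighted_dpoly a S (w(i := w i + t))
           = weighted_dpoly a S w + smult t (pCons 0 (\<Prod>l\<in>S - {i}. [:a l, -1:]))"
proof -
  have "(w(i := w i + t)) m = w m + (if m = i then t else 0)" for m
    by simp
  then have "(\<Sum>m\<in>S. smult ((w(i := w i + t)) m) (\<Prod>l\<in>S - {m}. [:a l, -1:]))
      = (\<Sum>m\<in>S. smult (w m) (\<Prod>l\<in>S - {m}. [:a l, -1:])) + smult t (\<Prod>l\<in>S - {i}. [:a l, -1:])"
    using assms by (simp only: smult_add_left sum.distrib)
      (simp add: if_distrib[of "\<lambda>x. smult x _"] cong: if_cong)
  then show ?thesis
    by (simp add: weighted_dpoly_def algebra_simps)
qed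

lemma weighted_dpoly_merge:
  assumes "finite S" "i \<in> S" "j \<notin> S" "a i = a j"
  shows "weighted_dpoly a (insert j S) w = [:a j, -1:] * weighted_dpoly a S (w(i := w i + w j))"
proof -
  have "(\<Prod>l\<in>S. [:a l, -1:]) = [:a j, -1:] * (\<Prod>l\<in>S - {i}. [:a l, -1:])"
    by (metis assms(4) prod.remove[OF assms(1,2)])
  then show ?thesis
    using assms by (simp add: weighted_dpoly_insert weighted_dpoly_update algebra_simps)
qed

lemma weighted_dpoly_remove_duplicates:
  assumes "finite S" "T \<subseteq> S" "\<forall>j\<in>T. \<exists>i\<in>S - T. a i = a j" "\<forall>m\<in>S. 0 < w m"
  shows "\<exists>w'. weighted_dpoly a S w = (\<Prod>j\<in>T. [:a j, -1:]) * weighted_dpoly a (S - T) w'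
           \<and> sum w' (S - T) = sum w S \<and> (\<forall>m\<in>S - T. 0 < w' m)"
  using finite_subset[OF assms(2,1)] assms(2,3)
proof (induction T)
  case empty
  then show ?case
    using assms(4) by auto
next
  case (insert j T)
  have "\<forall>k\<in>T. \<exists>i\<in>S - T. a i = a k"
    using insert.prems by blast
  then obtain w' where
    w': "weighted_dpoly a S w = (\<Prod>j\<in>T. [:a j, -1:]) * weighted_dpoly a (S - T) w'"
      "sum w' (S - T) = sum w S" "\<forall>m\<in>S - T. 0 < w' m"
    using insert.IH insert.prems by blast
  obtain i where i: "i \<in> S - insert j T" "a i = a j"
    using insert.prems by blast
  define w'' where "w'' = w'(i := w' i + w' j)"
  have j: "j \<notin> S - insert j T" and ST: "S - T = insert j (S - insert j T)"
    using insert.hyps insert.prems by auto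
  have "weighted_dpoly a (S - T) w' = [:a j, -1:] * weighted_dpoly a (S - insert j T) w''"
    unfolding ST w''_def using assms(1) j i by (intro weighted_dpoly_merge) auto
  then have "weighted_dpoly a S w
      = (\<Prod>k\<in>insert j T. [:a k, -1:]) * weighted_dpoly a (S - insert j T) w''"
    using w'(1)
    by (simp only: prod.insert[OF insert.hyps] mult.assoc mult.left_commute[of "[:a j, -1:]"])
  moreover have "sum w'' (S - insert j T) = sum w' (S - T)"
  proof -
    have "sum w'' (S - insert j T) = w'' i + sum w' (S - insert j T - {i})"
      using assms(1) i by (simp add: sum.remove w''_def)
    also have "\<dots> = w' j + sum w' (S - insert j T)"
      using assms(1) i by (simp add: sum.remove w''_def)
    also have "\<dots> = sum w' (S - T)"
      using assms(1) j by (simp only: ST) (simp add: sum.insert_remove)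
    finally show ?thesis .
  qed
  moreover have "\<forall>m\<in>S - insert j T. 0 < w'' m"
    using w'(3) i insert.hyps insert.prems by (auto simp: w''_def add_pos_pos)
  ultimately show ?case
    using w'(2) by metis
qed

lemma degree_prod_linear: "degree (\<Prod>l\<in>S. [:a l, -1:] :: real poly) = card S"
  by (cases "finite S") (simp_all add: degree_prod_eq_sum_degree)

lemma lead_coeff_prod_linear: "lead_coeff (\<Prod>l\<in>S. [:a l, -1:] :: real poly) = (-1) ^ card S"
  by (cases "finite S") (simp_all add: lead_coeff_prod)

lemma weighted_dpoly_top_coeff:
  assumes "finite S"
  shows "degree (weighted_dpoly a S w) \<le> card S
    \<and> coeff (weighted_dpoly a S w) (card S) = (-1) ^ card S * (1 - sum w S)"
  using assms
proof (induction S rule: finite_induct)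
  case empty
  then show ?case by (simp add: weighted_dpoly_def)
next
  case (insert x S)
  define E where "E = weighted_dpoly a S w"
  define P where "P = (\<Prod>l\<in>S. [:a l, -1:])"
  have E: "degree E \<le> card S" "coeff E (card S) = (-1) ^ card S * (1 - sum w S)"
    using insert.IH by (simp_all add: E_def)
  have P: "degree P = card S" "coeff P (card S) = (-1) ^ card S"
    using degree_prod_linear[of a S] lead_coeff_prod_linear[of a S] by (simp_all add: P_def)
  have eq: "weighted_dpoly a (insert x S) w = smult (a x) E + pCons 0 (smult (w x) P - E)"
    using weighted_dpoly_insert[OF insert.hyps] by (simp add: E_def P_def algebra_simps)
  have "degree (smult (a x) E + pCons 0 (smult (w x) P - E)) \<le> Suc (card S)"
    using E P by (intro degree_add_le) (auto intro: order.trans[OF degree_smult_le]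
        order.trans[OF degree_diff_le])
  moreover have "coeff E (Suc (card S)) = 0"
    using E by (simp add: coeff_eq_0)
  ultimately show ?case
    using insert.hyps E P by (simp add: eq algebra_simps)
qed

lemma degree_weighted_dpoly:
  assumes "finite S" "sum w S \<noteq> 1"
  shows "degree (weighted_dpoly a S w) = card S"
proof -
  have "coeff (weighted_dpoly a S w) (card S) \<noteq> 0"
    using weighted_dpoly_top_coeff[OF assms(1)] assms(2) by simp
  then show ?thesis
    using weighted_dpoly_top_coeff[OF assms(1)] le_degree by (metis le_antisym)
qed

lemma lead_coeff_weighted_dpoly:
  assumes "finite S" "sum w S \<noteq> 1"
  shows "lead_coeff (weighted_dpoly a S w) = (-1) ^ card S * (1 - sum w S)"
  using weighted_dpoly_top_coeff[OF assms(1)] degree_weighted_dpoly[OF assms] by simp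

lemma poly_weighted_dpoly_node:
  assumes "finite S" "m \<in> S"
  shows "poly (weighted_dpoly a S w) (a m) = a m * w m * (\<Prod>l\<in>S - {m}. a l - a m)"
proof -
  have "(\<Sum>n\<in>S - {m}. w n * (\<Prod>l\<in>S - {n}. a l - a m)) = 0"
    using assms by (intro sum.neutral ballI) (auto simp: prod_zero_iff)
  then have "(\<Sum>n\<in>S. w n * (\<Prod>l\<in>S - {n}. a l - a m)) = w m * (\<Prod>l\<in>S - {m}. a l - a m)"
    using assms by (simp add: sum.remove)
  moreover have "(\<Prod>l\<in>S. a l - a m) = 0"
    using assms by (intro prod_zero) auto
  ultimately show ?thesis
    by (simp add: poly_weighted_dpoly)
qed

lemma weighted_dpoly_sign_at_node:
  assumes "finite S" "m \<in> S" "inj_on a S" "0 < a m" "0 < w m"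
  shows "0 < (-1) ^ card {l\<in>S. a l < a m} * poly (weighted_dpoly a S w) (a m)"
proof -
  let ?sgn = "\<lambda>l. if a l < a m then -1 else 1 :: real"
  have "(\<Prod>l\<in>S - {m}. ?sgn l) = (-1) ^ card {l\<in>S. a l < a m}"
  proof -
    have "{l\<in>S. a l < a m} = (S - {m}) \<inter> {l. a l < a m}"
      by auto
    then show ?thesis
      using assms(1) by (simp add: prod.If_cases)
  qed
  moreover have "0 < ?sgn l * (a l - a m)" if "l \<in> S - {m}" for l
    using assms(2,3) that inj_onD[of a S l m] by (cases "a l < a m") (auto simp: not_less le_less)
  then have "0 < (\<Prod>l\<in>S - {m}. ?sgn l * (a l - a m))"
    by (rule prod_pos)
  ultimately have "0 < (-1) ^ card {l\<in>S. a l < a m} * (\<Prod>l\<in>S - {m}. a l - a m)"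
    by (simp add: prod.distrib)
  then show ?thesis
    using assms by (simp add: poly_weighted_dpoly_node mult.left_commute[of _ "a m * w m"])
qed

lemma weighted_dpoly_root_between_nodes:
  assumes "finite S" "inj_on a S" "\<forall>l\<in>S. 0 < a l \<and> 0 < w l"
    and "m \<in> S" "n \<in> S" "a m < a n" "\<not> (\<exists>l\<in>S. a m < a l \<and> a l < a n)"
  shows "\<exists>x. a m < x \<and> x < a n \<and> poly (weighted_dpoly a S w) x = 0"
proof -
  let ?E = "weighted_dpoly a S w" and ?below = "\<lambda>t. card {l\<in>S. a l < t}"
  have "l = m \<or> a l < a m" if "l \<in> S" "a l < a n" for l
    using assms(2,4,7) that inj_onD[of a S l m] by (cases "a m < a l") auto
  then have "{l\<in>S. a l < a n} = insert m {l\<in>S. a l < a m}"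
    using assms(4,6) by auto
  then have below_n: "?below (a n) = Suc (?below (a m))"
    using assms(1) by simp
  define \<sigma> :: real where "\<sigma> = (-1) ^ ?below (a m)"
  have "0 < - (\<sigma> * poly ?E (a n))"
    using weighted_dpoly_sign_at_node[of S n a w] assms below_n by (simp add: \<sigma>_def)
  moreover have "0 < \<sigma> * poly ?E (a m)"
    using weighted_dpoly_sign_at_node[of S m a w] assms by (simp add: \<sigma>_def)
  ultimately have "0 < (\<sigma> * poly ?E (a m)) * - (\<sigma> * poly ?E (a n))"
    by (rule mult_pos_pos[rotated])
  also have "\<dots> = - ((\<sigma> * \<sigma>) * (poly ?E (a m) * poly ?E (a n)))"
    by (simp add: algebra_simps)
  also have "\<sigma> * \<sigma> = 1"
    by (simp add: \<sigma>_def flip: power_add)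
  finally have "poly ?E (a m) * poly ?E (a n) < 0"
    by simp
  then show ?thesis
    using poly_IVT[OF assms(6)] by blast
qed

lemma weighted_dpoly_negative_root:
  assumes "finite S" "\<forall>l\<in>S. 0 < a l" "1 < sum w S"
  shows "\<exists>x<0. poly (weighted_dpoly a S w) x = 0"
proof -
  let ?E = "weighted_dpoly a S w"
  define q where "q = - pcompose ?E [:0, -1:]"
  have "lead_coeff q = - (lead_coeff ?E * (-1) ^ degree ?E)"
    by (simp add: q_def lead_coeff_comp)
  also have "\<dots> = sum w S - 1"
    using assms lead_coeff_weighted_dpoly[of S w a] degree_weighted_dpoly[of S w a]
    by (simp add: mult.commute[of _ "(-1) ^ card S"] flip: power_add)
  finally have lc: "0 < lead_coeff q"
    using assms(3) by simp
  then obtain t0 where t0: "\<forall>x\<ge>t0. lead_coeff q \<le> poly q x"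
    using poly_pinfty_gt_lc by blast
  define t where "t = max t0 1"
  have "lead_coeff q \<le> poly q t"
    using t0 by (simp add: t_def)
  moreover have "poly q t = - poly ?E (- t)"
    by (simp add: q_def poly_pcompose)
  ultimately have "poly ?E (- t) < 0"
    using lc by linarith
  moreover have "0 < poly ?E 0"
    using assms by (simp add: poly_weighted_dpoly prod_pos)
  moreover have "- t < 0"
    by (simp add: t_def)
  ultimately show ?thesis
    using poly_IVT_pos[of "- t" 0 ?E] by force
qed

section \<open>The leading principal minors\<close>

lemma dpoly_eq_weighted_dpoly: "dpoly alpha k = weighted_dpoly alpha {1..k} (\<lambda>_. 1)"
  by (simp add: dpoly_def weighted_dpoly_def)

lemma poly_dpoly_Suc:
  "poly (dpoly alpha (Suc k)) c
     = (alpha (Suc k) - c) * poly (dpoly alpha k) c + c * (\<Prod>l\<in>{1..k}. alpha l - c)"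
proof -
  have "{1..Suc k} = insert (Suc k) {1..k}"
    by auto
  then show ?thesis
    by (simp add: dpoly_eq_weighted_dpoly weighted_dpoly_insert poly_prod left_diff_distrib)
qed

lemma poly_dpoly_0: "poly (dpoly alpha k) 0 = (\<Prod>l\<in>{1..k}. alpha l)"
  by (simp add: dpoly_eq_weighted_dpoly poly_weighted_dpoly)

lemma poly_dpoly_2: "poly (dpoly alpha 2) c = alpha 1 * alpha 2 - c\<^sup>2"
  using poly_dpoly_Suc[of alpha 1 c] poly_dpoly_Suc[of alpha 0 c]
  by (simp add: dpoly_def numeral_2_eq_2 power2_eq_square algebra_simps)

lemma degree_dpoly: "2 \<le> k \<Longrightarrow> degree (dpoly alpha k) = k"
  by (simp add: dpoly_eq_weighted_dpoly degree_weighted_dpoly)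

lemma lead_coeff_dpoly_nonzero: "2 \<le> k \<Longrightarrow> lead_coeff (dpoly alpha k) \<noteq> 0"
  using degree_dpoly[of k alpha] by (metis degree_0 leading_coeff_0_iff not_numeral_le_zero)

definition const_offdiag_mat :: "nat \<Rightarrow> (nat \<Rightarrow> real) \<Rightarrow> real \<Rightarrow> real mat" where
  "const_offdiag_mat n \<beta> c = mat n n (\<lambda>(i, j). if i = j then \<beta> i else c)"

lemma lead_sub_Bmat:
  "k \<le> p \<Longrightarrow> lead_sub k (Bmat p alpha c) = const_offdiag_mat k (\<lambda>i. alpha (i + 1)) c"
  unfolding lead_sub_def Bmat_def const_offdiag_mat_def by (rule eq_matI) auto

lemma det_const_offdiag_last_row:
  fixes \<beta> :: "nat \<Rightarrow> real"
  shows "det (mat (Suc n) (Suc n) (\<lambda>(i, j). if i = n \<or> i \<noteq> j then c else \<beta> i))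
     = c * (\<Prod>i<n. \<beta> i - c)"
proof -
  \<comment> \<open>Row \<open>i < n\<close> is \<open>\<beta> i - c\<close> times the \<open>i\<close>-th unit row plus \<open>c\<close> times the all-ones row, and
    the last row is \<open>c\<close> times the all-ones row: the matrix is \<open>U * W\<close>, with \<open>W\<close> the identity
    whose last row is replaced by ones.\<close>
  define U where "U = mat (Suc n) (Suc n)
    (\<lambda>(i, l). (if l = i \<and> i < n then \<beta> i - c else 0) + (if l = n then c else 0))"
  define W where "W = mat (Suc n) (Suc n) (\<lambda>(i, j). if i = j \<or> i = n then 1 else 0 :: real)"
  have U: "U \<in> carrier_mat (Suc n) (Suc n)" and W: "W \<in> carrier_mat (Suc n) (Suc n)"
    by (simp_all add: U_def W_def)
  have "mat (Suc n) (Suc n) (\<lambda>(i, j). if i = n \<or> i \<noteq> j then c else \<beta> i) = U * W"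
  proof (rule eq_matI)
    fix i j assume "i < dim_row (U * W)" "j < dim_col (U * W)"
    then have ij: "i < Suc n" "j < Suc n"
      using U W by auto
    have "(U * W) $$ (i, j) = (\<Sum>l<Suc n. U $$ (i, l) * W $$ (l, j))"
      using ij U W by (simp add: scalar_prod_def atLeast0LessThan)
    also have "\<dots> = (if i < n then (\<beta> i - c) * W $$ (i, j) else 0) + c * W $$ (n, j)"
      using ij
      by (simp add: U_def distrib_right sum.distrib if_distrib[of "\<lambda>x. x * _"] cong: if_cong)
    finally show "mat (Suc n) (Suc n) (\<lambda>(i, j). if i = n \<or> i \<noteq> j then c else \<beta> i) $$ (i, j)
        = (U * W) $$ (i, j)"
      using ij by (auto simp: W_def)
  qed (use U W in auto)
  moreover have "det U = prod_list (diag_mat U)"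
    by (rule det_upper_triangular[OF _ U]) (auto simp: U_def)
  moreover have "prod_list (diag_mat U) = (\<Prod>i<n. \<beta> i - c) * c"
    using U by (simp add: prod_list_diag_prod U_def atLeast0LessThan)
  moreover have "det W = prod_list (diag_mat W)"
    by (rule det_lower_triangular[OF _ W]) (auto simp: W_def)
  moreover have "prod_list (diag_mat W) = 1"
    using W by (simp add: prod_list_diag_prod W_def)
  ultimately show ?thesis
    using det_mult[OF U W] by simp
qed

lemma det_const_offdiag_mat_Suc:
  "det (const_offdiag_mat (Suc n) \<beta> c)
     = (\<beta> n - c) * det (const_offdiag_mat n \<beta> c) + c * (\<Prod>i<n. \<beta> i - c)"
proof -
  define A where "A = const_offdiag_mat (Suc n) \<beta> c"
  define u where "u = vec (Suc n) (\<lambda>_. c)"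
  define v where "v = vec (Suc n) (\<lambda>j. if j = n then \<beta> n - c else 0)"
  define A' where "A' = mat\<^sub>r (Suc n) (Suc n) (\<lambda>i. if i = n then v else row A i)"
  have A: "A \<in> carrier_mat (Suc n) (Suc n)"
    by (simp add: A_def const_offdiag_mat_def)
  have "A = mat\<^sub>r (Suc n) (Suc n) (\<lambda>i. if i = n then u + v else row A i)"
    by (rule eq_matI) (auto simp: A_def const_offdiag_mat_def u_def v_def)
  moreover have "det (mat\<^sub>r (Suc n) (Suc n) (\<lambda>i. if i = n then u + v else row A i))
      = det (mat\<^sub>r (Suc n) (Suc n) (\<lambda>i. if i = n then u else row A i)) + det A'"
    unfolding A'_def using A by (intro det_row_add[where a = "\<lambda>_. u" and b = "\<lambda>_. v"])
      (auto simp: u_def v_def)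
  ultimately have
    "det A = det (mat\<^sub>r (Suc n) (Suc n) (\<lambda>i. if i = n then u else row A i)) + det A'"
    by simp
  also have "mat\<^sub>r (Suc n) (Suc n) (\<lambda>i. if i = n then u else row A i)
      = mat (Suc n) (Suc n) (\<lambda>(i, j). if i = n \<or> i \<noteq> j then c else \<beta> i)"
    by (rule eq_matI) (auto simp: A_def const_offdiag_mat_def u_def)
  also have "det A' = (\<Sum>j<Suc n. A' $$ (n, j) * cofactor A' n j)"
    by (rule laplace_expansion_row) (auto simp: A'_def)
  also have "\<dots> = (\<beta> n - c) * cofactor A' n n"
    by (auto simp: A'_def v_def intro!: sum.neutral)
  also have "cofactor A' n n = det (const_offdiag_mat n \<beta> c)"
    unfolding cofactor_def
    by (simp, rule arg_cong[of _ _ det], rule eq_matI)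
      (auto simp: A'_def A_def mat_delete_def const_offdiag_mat_def)
  finally show ?thesis
    by (simp add: A_def det_const_offdiag_last_row)
qed

lemma det_const_offdiag_mat_eq_dpoly:
  "det (const_offdiag_mat k (\<lambda>i. alpha (i + 1)) c) = poly (dpoly alpha k) c"
proof (induction k)
  case 0
  then show ?case
    by (simp add: const_offdiag_mat_def dpoly_def)
next
  case (Suc k)
  have "(\<Prod>i<k. alpha (i + 1) - c) = (\<Prod>l\<in>{1..k}. alpha l - c)"
    by (simp add: prod.atLeast1_atMost_eq)
  then show ?case
    using Suc.IH by (simp add: det_const_offdiag_mat_Suc poly_dpoly_Suc)
qed

lemma lead_minor_Bmat: "k \<le> p \<Longrightarrow> lead_minor k (Bmat p alpha c) = poly (dpoly alpha k) c"
  using det_const_offdiag_mat_eq_dpoly by (simp add: lead_minor_def lead_sub_Bmat)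

section \<open>Interlacing of the roots\<close>

definition tie_indices :: "(nat \<Rightarrow> real) \<Rightarrow> nat \<Rightarrow> nat set" where
  "tie_indices alpha k = {j\<in>{2..k}. alpha (j - 1) = alpha j}"

lemma untied_representative:
  assumes "j \<in> {1..k}"
  shows "\<exists>i\<in>{1..k} - tie_indices alpha k. i \<le> j \<and> alpha i = alpha j"
proof -
  define i where "i = (LEAST l. 1 \<le> l \<and> alpha l = alpha j)"
  have i: "1 \<le> i" "alpha i = alpha j" "i \<le> j"
    using assms LeastI[of "\<lambda>l. 1 \<le> l \<and> alpha l = alpha j" j] Least_le[of _ j]
    by (auto simp: i_def)
  have "i \<notin> tie_indices alpha k"
  proof
    assume "i \<in> tie_indices alpha k"
    then have "i \<le> i - 1"
      using i unfolding i_def tie_indices_def by (intro Least_le) auto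
    with \<open>i \<in> tie_indices alpha k\<close> show False
      by (auto simp: tie_indices_def)
  qed
  then show ?thesis
    using i assms by auto
qed

lemma strict_mono_on_untied:
  assumes "mono_on {1..k} alpha"
  shows "strict_mono_on ({1..k} - tie_indices alpha k) alpha"
proof (rule strict_mono_onI)
  fix m n assume mn: "m \<in> {1..k} - tie_indices alpha k" "n \<in> {1..k} - tie_indices alpha k" "m < n"
  then have "n - 1 \<in> {1..k}" "n \<in> {2..k}" "m \<le> n - 1"
    by auto
  then have "alpha m \<le> alpha (n - 1)" "alpha (n - 1) \<le> alpha n" "alpha (n - 1) \<noteq> alpha n"
    using mn mono_onD[OF assms] unfolding tie_indices_def by auto
  then show "alpha m < alpha n"
    by simp
qed

lemma dpoly_factor_ties:
  "\<exists>w. dpoly alpha k = (\<Prod>j\<in>tie_indices alpha k. [:alpha j, -1:])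
          * weighted_dpoly alpha ({1..k} - tie_indices alpha k) w
     \<and> sum w ({1..k} - tie_indices alpha k) = k
     \<and> (\<forall>m\<in>{1..k} - tie_indices alpha k. 0 < w m)"
proof -
  have "tie_indices alpha k \<subseteq> {1..k}"
    by (auto simp: tie_indices_def)
  moreover have "\<exists>i\<in>{1..k} - tie_indices alpha k. alpha i = alpha j" if "j \<in> tie_indices alpha k" for j
    using untied_representative[of j k alpha] \<open>tie_indices alpha k \<subseteq> {1..k}\<close> that by blast
  ultimately show ?thesis
    using weighted_dpoly_remove_duplicates[of "{1..k}" "tie_indices alpha k" alpha "\<lambda>_. 1"]
    by (simp add: dpoly_eq_weighted_dpoly)
qed

lemma weighted_dpoly_untied_roots:
  fixes alpha w :: "nat \<Rightarrow> real" and k :: nat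
  defines "D \<equiv> {1..k} - tie_indices alpha k"
  assumes mono: "mono_on {1..k} alpha" and "0 < alpha 1" "2 \<le> k"
    and w: "\<forall>m\<in>D. 0 < w m" "sum w D = k"
  shows "\<exists>r. (\<forall>j\<in>D. poly (weighted_dpoly alpha D w) (r j) = 0) \<and> r 1 < 0
              \<and> (\<forall>j\<in>D - {1}. alpha (j - 1) < r j \<and> r j < alpha j)"
proof -
  have D: "finite D" "D \<subseteq> {1..k}" "inj_on alpha D"
    using strict_mono_on_imp_inj_on[OF strict_mono_on_untied[OF mono]] by (auto simp: D_def)
  have pos: "\<forall>l\<in>D. 0 < alpha l \<and> 0 < w l"
    using D(2) w(1) mono_onD[OF mono, of 1] \<open>0 < alpha 1\<close> by fastforce
  obtain r1 where r1: "r1 < 0" "poly (weighted_dpoly alpha D w) r1 = 0"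
    using weighted_dpoly_negative_root[OF D(1), of alpha w] pos w(2) \<open>2 \<le> k\<close> by auto
  have "\<exists>x. alpha (j - 1) < x \<and> x < alpha j \<and> poly (weighted_dpoly alpha D w) x = 0"
    if j: "j \<in> D - {1}" for j
  proof -
    have j': "j \<in> {2..k}" "j - 1 \<in> {1..k}" "j \<notin> tie_indices alpha k"
      using j by (auto simp: D_def)
    obtain i where i: "i \<in> D" "i \<le> j - 1" "alpha i = alpha (j - 1)"
      using untied_representative[OF j'(2), of alpha] unfolding D_def by blast
    have "alpha (j - 1) < alpha j"
      using j' mono_onD[OF mono, of "j - 1" j] by (force simp: tie_indices_def)
    moreover have "\<not> (alpha i < alpha l \<and> alpha l < alpha j)" if "l \<in> D" for l
    proof (cases "l \<le> j - 1")
      case True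
      then show ?thesis
        using i that D(2) mono_onD[OF mono, of l "j - 1"] j' by auto
    next
      case False
      then have "alpha j \<le> alpha l"
        using that D(2) j' by (intro mono_onD[OF mono]) auto
      then show ?thesis
        by simp
    qed
    ultimately show ?thesis
      using weighted_dpoly_root_between_nodes[OF D(1,3) pos i(1) _ _, of j] i(3) j by auto
  qed
  then obtain \<rho> where "\<forall>j\<in>D - {1}. alpha (j - 1) < \<rho> j \<and> \<rho> j < alpha j
      \<and> poly (weighted_dpoly alpha D w) (\<rho> j) = 0"
    by metis
  then show ?thesis
    using r1 by (intro exI[of _ "\<rho>(1 := r1)"]) auto
qed

definition interlacing_roots :: "(nat \<Rightarrow> real) \<Rightarrow> nat \<Rightarrow> (nat \<Rightarrow> real) \<Rightarrow> bool" where
  "interlacing_roots alpha k r \<longleftrightarrow>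
     dpoly alpha k = smult (lead_coeff (dpoly alpha k)) (\<Prod>j\<in>{1..k}. [:- r j, 1:])
     \<and> (\<forall>i j. 1 \<le> i \<longrightarrow> i \<le> j \<longrightarrow> j \<le> k \<longrightarrow> r i \<le> r j)
     \<and> r 1 < 0 \<and> (\<forall>j\<in>{2..k}. alpha (j - 1) \<le> r j \<and> r j \<le> alpha j)"

lemma interlacing_roots_exist:
  assumes mono: "mono_on {1..k} alpha" and "0 < alpha 1" "2 \<le> k"
  shows "\<exists>r. interlacing_roots alpha k r"
proof -
  define T where "T = tie_indices alpha k"
  define D where "D = {1..k} - T"
  obtain w where w: "dpoly alpha k = (\<Prod>j\<in>T. [:alpha j, -1:]) * weighted_dpoly alpha D w"
    "sum w D = k" "\<forall>m\<in>D. 0 < w m"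
    using dpoly_factor_ties[of alpha k] by (auto simp: T_def D_def)
  define E where "E = weighted_dpoly alpha D w"
  obtain \<rho> where \<rho>: "\<forall>j\<in>D. poly E (\<rho> j) = 0" "\<rho> 1 < 0"
    "\<forall>j\<in>D - {1}. alpha (j - 1) < \<rho> j \<and> \<rho> j < alpha j"
    using weighted_dpoly_untied_roots[OF assms, where w = w] w(2,3) unfolding E_def D_def T_def by blast
  define r where "r j = (if j \<in> T then alpha j else \<rho> j)" for j
  have T: "T \<subseteq> {2..k}" "\<forall>j\<in>T. alpha (j - 1) = alpha j" and "1 \<in> D"
    using \<open>2 \<le> k\<close> by (auto simp: T_def D_def tie_indices_def)
  then have r1: "r 1 < 0"
    using \<rho>(2) by (auto simp: r_def)
  have between: "alpha (j - 1) \<le> r j \<and> r j \<le> alpha j" if "j \<in> {2..k}" for j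
    using that T \<rho>(3) by (cases "j \<in> T") (auto simp: r_def D_def less_imp_le)
  have below: "r i \<le> alpha i" if "i \<in> {1..k}" for i
    using that r1 between \<open>0 < alpha 1\<close> by (cases "i = 1") auto
  have sorted: "r i \<le> r j" if "1 \<le> i" "i \<le> j" "j \<le> k" for i j
  proof (cases "i = j")
    case False
    then have "alpha i \<le> alpha (j - 1)"
      using that by (intro mono_onD[OF mono]) auto
    then show ?thesis
      using that False below[of i] between[of j] by force
  qed simp
  have "strict_mono_on D r"
  proof (rule strict_mono_onI)
    fix i j assume ij: "i \<in> D" "j \<in> D" "i < j"
    have "r i < alpha i"
      using ij r1 \<rho>(3) \<open>0 < alpha 1\<close> by (cases "i = 1") (auto simp: r_def D_def)
    also have "alpha i \<le> alpha (j - 1)"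
      using ij by (intro mono_onD[OF mono]) (auto simp: D_def)
    also have "alpha (j - 1) < r j"
      using ij \<rho>(3) by (auto simp: r_def D_def)
    finally show "r i < r j" .
  qed
  then have "inj_on r D"
    by (rule strict_mono_on_imp_inj_on)
  moreover have "card D = degree E"
    using w(2) \<open>2 \<le> k\<close> by (simp add: E_def D_def degree_weighted_dpoly)
  moreover have "\<forall>z\<in>r ` D. poly E z = 0"
    using \<rho>(1) by (auto simp: r_def D_def)
  ultimately have "E = smult (lead_coeff E) (\<Prod>z\<in>r ` D. [:- z, 1:])"
    by (intro poly_eq_smult_prod_distinct_roots) (simp_all add: card_image D_def)
  then have E: "E = smult (lead_coeff E) (\<Prod>j\<in>D. [:- r j, 1:])"
    using \<open>inj_on r D\<close> by (simp add: prod.reindex)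
  have "(\<Prod>j\<in>T. [:alpha j, -1:]) = (\<Prod>j\<in>T. smult (-1) [:- r j, 1:])"
    by (intro prod.cong) (auto simp: r_def)
  also have "\<dots> = smult ((-1) ^ card T) (\<Prod>j\<in>T. [:- r j, 1:])"
    by (simp only: prod_smult prod_constant)
  finally have "dpoly alpha k
      = smult ((-1) ^ card T) (\<Prod>j\<in>T. [:- r j, 1:]) * smult (lead_coeff E) (\<Prod>j\<in>D. [:- r j, 1:])"
    using w(1) E by (simp only: E_def)
  then have "dpoly alpha k = smult ((-1) ^ card T * lead_coeff E) (\<Prod>j\<in>T \<union> D. [:- r j, 1:])"
    using T(1) finite_subset[OF T(1)] by (subst prod.union_disjoint) (auto simp: D_def mult.commute)
  moreover have "T \<union> D = {1..k}"
    using T by (auto simp: D_def)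
  ultimately have "dpoly alpha k = smult (lead_coeff (dpoly alpha k)) (\<Prod>j\<in>{1..k}. [:- r j, 1:])"
    by (simp add: lead_coeff_prod)
  then show ?thesis
    using sorted r1 between by (auto simp: interlacing_roots_def)
qed

lemma interlacing_roots_root_iff:
  assumes "interlacing_roots alpha k r" "2 \<le> k"
  shows "poly (dpoly alpha k) x = 0 \<longleftrightarrow> (\<exists>j\<in>{1..k}. x = r j)"
proof -
  have split: "dpoly alpha k = smult (lead_coeff (dpoly alpha k)) (\<Prod>j\<in>{1..k}. [:- r j, 1:])"
    using assms(1) by (simp add: interlacing_roots_def)
  have "lead_coeff (dpoly alpha k) \<noteq> 0"
    using lead_coeff_dpoly_nonzero[OF assms(2)] .
  then show ?thesis
    using root_of_smult_prod_linear[OF split] by (subst split) (auto simp: poly_prod)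
qed

lemma interlacing_roots_complex_roots_real:
  assumes "interlacing_roots alpha k r" "2 \<le> k"
    and "poly (map_poly complex_of_real (dpoly alpha k)) z = 0"
  shows "z \<in> \<real>"
proof -
  have "lead_coeff (dpoly alpha k) \<noteq> 0"
    using lead_coeff_dpoly_nonzero[OF assms(2)] .
  then show ?thesis
    using assms(1,3) by (intro complex_root_of_smult_prod_linear) (auto simp: interlacing_roots_def)
qed

lemma interlacing_roots_2:
  assumes "interlacing_roots alpha 2 r" "0 < alpha 1"
  shows "r 1 = - sqrt (alpha 1 * alpha 2) \<and> r 2 = sqrt (alpha 1 * alpha 2)"
proof -
  have "(r j)\<^sup>2 = alpha 1 * alpha 2" if "j \<in> {1..2}" for j
    using interlacing_roots_root_iff[OF assms(1), of "r j"] that poly_dpoly_2[of alpha "r j"] by auto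
  moreover have "r 1 < 0" "0 < r 2"
    using assms by (auto simp: interlacing_roots_def)
  ultimately show ?thesis
    by (metis atLeastAtMost_iff one_le_numeral order_refl real_sqrt_abs abs_of_neg abs_of_pos
        minus_minus)
qed

lemma interlacing_roots_Suc:
  assumes r: "interlacing_roots alpha k r" and r': "interlacing_roots alpha (Suc k) r'"
    and mono: "mono_on {1..Suc k} alpha" and "0 < alpha 1" "2 \<le> k"
  shows "r 1 \<le> r' 1 \<and> r' 2 \<le> r 2"
proof -
  let ?d = "poly (dpoly alpha (Suc k))"
  have pos: "0 < alpha l" if "l \<in> {1..Suc k}" for l
    using that mono_onD[OF mono, of 1 l] \<open>0 < alpha 1\<close> by auto
  have r12: "r 1 < 0" "alpha 1 \<le> r 2" "r 2 \<le> alpha 2"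
    using r \<open>2 \<le> k\<close> unfolding interlacing_roots_def by (auto dest: bspec[of _ _ 2])
  have r'12: "r' 1 < 0" "alpha 1 \<le> r' 2"
    using r' \<open>2 \<le> k\<close> unfolding interlacing_roots_def by (auto dest: bspec[of _ _ 2])
  have root_cases: "x = r' 1 \<or> r' 2 \<le> x" if root: "?d x = 0" for x
  proof -
    obtain j where "j \<in> {1..Suc k}" "x = r' j"
      using interlacing_roots_root_iff[OF r', of x] root \<open>2 \<le> k\<close> by auto
    then show ?thesis
      using r' by (cases "j = 1") (auto simp: interlacing_roots_def)
  qed
  have d_at_root: "?d (r j) = r j * (\<Prod>l\<in>{1..k}. alpha l - r j)" if "j \<in> {1..k}" for j
  proof -
    have "poly (dpoly alpha k) (r j) = 0"
      using interlacing_roots_root_iff[OF r \<open>2 \<le> k\<close>] that by blast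
    then show ?thesis
      by (simp add: poly_dpoly_Suc)
  qed
  have d0: "0 < ?d 0"
    unfolding poly_dpoly_0 using pos by (intro prod_pos) auto
  have "r 1 \<le> r' 1"
  proof -
    have "0 < (\<Prod>l\<in>{1..k}. alpha l - r 1)"
      using pos r12 by (intro prod_pos) fastforce
    then have "?d (r 1) < 0"
      using d_at_root[of 1] r12 \<open>2 \<le> k\<close> by (simp add: mult_neg_pos)
    then obtain x where "r 1 < x" "x < 0" "?d x = 0"
      using poly_IVT_pos[OF r12(1) _ d0] by blast
    then show ?thesis
      using root_cases[of x] r'12 \<open>0 < alpha 1\<close> by auto
  qed
  moreover have "r' 2 \<le> r 2"
  proof -
    note r2 = r12(2,3)
    have "0 \<le> (\<Prod>l\<in>{2..k}. alpha l - r 2)"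
    proof (intro prod_nonneg ballI)
      fix l assume "l \<in> {2..k}"
      then have "alpha 2 \<le> alpha l"
        by (intro mono_onD[OF mono]) auto
      then show "0 \<le> alpha l - r 2"
        using r2 by simp
    qed
    moreover have "(\<Prod>l\<in>{1..k}. alpha l - r 2) = (alpha 1 - r 2) * (\<Prod>l\<in>{2..k}. alpha l - r 2)"
      using \<open>2 \<le> k\<close> by (subst prod.atLeast_Suc_atMost) (auto simp: numeral_2_eq_2)
    ultimately have "?d (r 2) \<le> 0"
      using d_at_root[of 2] r2 \<open>0 < alpha 1\<close> \<open>2 \<le> k\<close>
      by (simp add: mult_nonneg_nonpos mult_nonpos_nonneg)
    show ?thesis
    proof (cases "?d (r 2) = 0")
      case True
      then show ?thesis
        using root_cases[of "r 2"] r'12 r2 \<open>0 < alpha 1\<close> by auto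
    next
      case False
      then obtain x where "0 < x" "x < r 2" "?d x = 0"
        using poly_IVT_neg[OF _ d0, of "r 2"] \<open>?d (r 2) \<le> 0\<close> r2 \<open>0 < alpha 1\<close> by force
      then show ?thesis
        using root_cases[of x] r'12 by auto
    qed
  qed
  ultimately show ?thesis ..
qed

theorem lemma1:
  fixes p :: nat and alpha :: "nat \<Rightarrow> real"
  assumes "p \<ge> 2"
  shows "(\<forall>k\<in>{1..p}. \<forall>c. lead_minor k (Bmat p alpha c) = poly (dpoly alpha k) c)
    \<and> (\<forall>k\<in>{2..p}. degree (dpoly alpha k) = k)
    \<and> ((0 < alpha 1 \<and> (\<forall>i j. 1 \<le> i \<longrightarrow> i \<le> j \<longrightarrow> j \<le> p \<longrightarrow> alpha i \<le> alpha j)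
          \<and> alpha p < 1) \<longrightarrow>
       (\<exists>r :: nat \<Rightarrow> nat \<Rightarrow> real.
          (\<forall>k\<in>{2..p}.
             (\<forall>z. poly (map_poly complex_of_real (dpoly alpha k)) z = 0 \<longrightarrow> z \<in> \<real>)
           \<and> dpoly alpha k = smult (lead_coeff (dpoly alpha k)) (\<Prod>j\<in>{1..k}. [:- r k j, 1:])
           \<and> (\<forall>i j. 1 \<le> i \<longrightarrow> i \<le> j \<longrightarrow> j \<le> k \<longrightarrow> r k i \<le> r k j)
           \<and> r k 1 < 0 \<and> 0 < alpha 1
           \<and> (\<forall>j\<in>{2..k}. alpha (j - 1) \<le> r k j \<and> r k j \<le> alpha j)
           \<and> alpha k < 1
           \<and> 0 < r k 2)
        \<and> r 2 1 = - sqrt (alpha 1 * alpha 2)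
        \<and> r 2 2 = sqrt (alpha 1 * alpha 2)
        \<and> (\<forall>k\<in>{2..<p}. r k 1 \<le> r (k + 1) 1 \<and> r (k + 1) 2 \<le> r k 2)))"
  apply (intro conjI impI)
    apply (simp add: lead_minor_Bmat)
   apply (simp add: degree_dpoly)
  subgoal premises hyps
  proof -
    from hyps have a1: "0 < alpha 1" and mono_p: "mono_on {1..p} alpha" and ap: "alpha p < 1"
      by (auto intro!: mono_onI)
    then have mono: "mono_on {1..k} alpha" if "k \<le> p" for k
      using that by (auto intro: mono_on_subset)
    have "\<forall>k\<in>{2..p}. \<exists>r. interlacing_roots alpha k r"
      using interlacing_roots_exist[OF mono] a1 by auto
    then obtain r where r: "\<And>k. k \<in> {2..p} \<Longrightarrow> interlacing_roots alpha k (r k)"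
      by metis
    have "alpha k < 1" if "k \<in> {2..p}" for k
      using mono_onD[OF mono_p, of k p] that ap by auto
    moreover have "0 < r k 2" if "k \<in> {2..p}" for k
      using r[OF that] that a1 unfolding interlacing_roots_def by (force dest: bspec[of _ _ 2])
    moreover have "r 2 1 = - sqrt (alpha 1 * alpha 2) \<and> r 2 2 = sqrt (alpha 1 * alpha 2)"
      using interlacing_roots_2[OF r a1] \<open>p \<ge> 2\<close> by simp
    moreover have "r k 1 \<le> r (k + 1) 1 \<and> r (k + 1) 2 \<le> r k 2" if "k \<in> {2..<p}" for k
      using interlacing_roots_Suc[OF r r mono a1] that by simp
    ultimately show ?thesis
      using a1 r interlacing_roots_complex_roots_real[OF r]
      by (intro exI[of _ r]) (auto simp: interlacing_roots_def)
  qed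
  done

end
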